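(* Let $A$ be a circular $m\times n$ matrix and let $\Gamma$ be a circuit in $D(A)$. Then $(\pi_+-\pi_-)^T\tilde A=p(\Gamma)\mathbf{1}^T$.
   Context: Notation: $[n]=\{1,\dots,n\}$ with addition mod $n$ (index $0$ identified with $n$); for $a,c\in[n]$ with $t\ge0$ minimal such that $a+t\equiv c\pmod n$, $[a,c)_n=\{a,\dots,a+t-1\}$ (mod $n$). An $m\times n$ $\{0,1\}$-matrix $A$ is circular if for each row $i$ there are $\ell_i\in[n]$ and an integer $2\le k_i\le n-1$ with row $i$ the incidence vector of $[\ell_i,\ell_i+k_i)_n$. $\tilde A=\binom{A}{I}\in\{0,1\}^{(m+n)\times n}$ with $I$ the $n\times n$ identity. $D(A)$: node set $[n]$ (labels mod $n$); forward arcs $a_i=(\ell_i-1,\ell_i+k_i-1)$ ($i\in[m]$, length $k_i$) and $a_{m+j}=(j-1,j)$ ($j\in[n]$, length $1$); reverse arcs $\bar a_i=(\ell_i+k_i-1,\ell_i-1)$ (length $-k_i$) and $\bar a_{m+j}=(j,j-1)$ (length $-1$). A circuit is a simple directed circuit; its winding number $p(\Gamma)$ satisfies $p(\Gamma)n=\sum_{a\in E(\Gamma)}l(a)$. $\pi_+\in\{0,1\}^{m+n}$ has $(\pi_+)_k=1$ iff $a_k\in E(\Gamma)$, and $\pi_-\in\{0,1\}^{m+n}$ has $(\pi_-)_k=1$ iff $\bar a_k\in E(\Gamma)$. *)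

theory Defs
  imports Complex_Main "HOL-Number_Theory.Cong"
begin

text \<open>Labels mod n: representative in [n] = {1..n} (0 identified with n).\<close>
definition mod1 :: "nat \<Rightarrow> int \<Rightarrow> nat" where
  "mod1 n x = nat ((x - 1) mod int n) + 1"

text \<open>Cyclic interval [a,c)_n.\<close>
definition cint :: "nat \<Rightarrow> nat \<Rightarrow> nat \<Rightarrow> nat set" where
  "cint n a c = (let t = (LEAST t::nat. [a + t = c] (mod n))
                 in {mod1 n (int a + int s) | s. s < t})"

definition circular_rep ::
  "nat \<Rightarrow> nat \<Rightarrow> (nat \<Rightarrow> nat \<Rightarrow> int) \<Rightarrow> (nat \<Rightarrow> nat) \<Rightarrow> (nat \<Rightarrow> nat) \<Rightarrow> bool" where
  "circular_rep m n A l k \<longleftrightarrow>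
     (\<forall>i\<in>{1..m}. l i \<in> {1..n} \<and> 2 \<le> k i \<and> k i \<le> n - 1 \<and>
        (\<forall>j\<in>{1..n}. A i j =
           (if j \<in> cint n (l i) (mod1 n (int (l i) + int (k i))) then 1 else 0)))"

definition circular :: "nat \<Rightarrow> nat \<Rightarrow> (nat \<Rightarrow> nat \<Rightarrow> int) \<Rightarrow> bool" where
  "circular m n A \<longleftrightarrow> (\<exists>l k. circular_rep m n A l k)"

text \<open>\<tilde>A = (A ; I), rows 1..m+n, columns 1..n.\<close>
definition Atilde :: "nat \<Rightarrow> (nat \<Rightarrow> nat \<Rightarrow> int) \<Rightarrow> nat \<Rightarrow> nat \<Rightarrow> int" where
  "Atilde m A r j = (if r \<le> m then A r j else (if r - m = j then 1 else 0))"

text \<open>Arcs of D(A): (True, idx) is the forward arc a_idx, (False, idx) the reverse arc.\<close>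
type_synonym arc = "bool \<times> nat"

definition arcs :: "nat \<Rightarrow> nat \<Rightarrow> arc set" where
  "arcs m n = {(d, r) | d r. r \<in> {1..m+n}}"

definition fwd_tail :: "nat \<Rightarrow> nat \<Rightarrow> (nat \<Rightarrow> nat) \<Rightarrow> nat \<Rightarrow> nat" where
  "fwd_tail m n l r = (if r \<le> m then mod1 n (int (l r) - 1) else mod1 n (int (r - m) - 1))"

definition fwd_head :: "nat \<Rightarrow> nat \<Rightarrow> (nat \<Rightarrow> nat) \<Rightarrow> (nat \<Rightarrow> nat) \<Rightarrow> nat \<Rightarrow> nat" where
  "fwd_head m n l k r = (if r \<le> m then mod1 n (int (l r) + int (k r) - 1) else mod1 n (int (r - m)))"

definition fwd_len :: "nat \<Rightarrow> (nat \<Rightarrow> nat) \<Rightarrow> nat \<Rightarrow> int" where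
  "fwd_len m k r = (if r \<le> m then int (k r) else 1)"

definition arc_tail :: "nat \<Rightarrow> nat \<Rightarrow> (nat \<Rightarrow> nat) \<Rightarrow> (nat \<Rightarrow> nat) \<Rightarrow> arc \<Rightarrow> nat" where
  "arc_tail m n l k e = (if fst e then fwd_tail m n l (snd e) else fwd_head m n l k (snd e))"

definition arc_head :: "nat \<Rightarrow> nat \<Rightarrow> (nat \<Rightarrow> nat) \<Rightarrow> (nat \<Rightarrow> nat) \<Rightarrow> arc \<Rightarrow> nat" where
  "arc_head m n l k e = (if fst e then fwd_head m n l k (snd e) else fwd_tail m n l (snd e))"

definition arc_len :: "nat \<Rightarrow> (nat \<Rightarrow> nat) \<Rightarrow> arc \<Rightarrow> int" where
  "arc_len m k e = (if fst e then fwd_len m k (snd e) else - fwd_len m k (snd e))"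

definition is_circuit :: "nat \<Rightarrow> nat \<Rightarrow> (nat \<Rightarrow> nat) \<Rightarrow> (nat \<Rightarrow> nat) \<Rightarrow> arc list \<Rightarrow> bool" where
  "is_circuit m n l k cs \<longleftrightarrow> cs \<noteq> [] \<and> distinct cs \<and> set cs \<subseteq> arcs m n \<and>
     (\<forall>i < length cs. arc_head m n l k (cs ! i) = arc_tail m n l k (cs ! ((i + 1) mod length cs))) \<and>
     distinct (map (arc_tail m n l k) cs)"

definition winding :: "nat \<Rightarrow> nat \<Rightarrow> (nat \<Rightarrow> nat) \<Rightarrow> arc list \<Rightarrow> real" where
  "winding m n k cs = real_of_int (\<Sum>e\<in>set cs. arc_len m k e) / real n"

definition pi_plus :: "arc list \<Rightarrow> nat \<Rightarrow> int" where
  "pi_plus cs r = (if (True, r) \<in> set cs then 1 else 0)"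

definition pi_minus :: "arc list \<Rightarrow> nat \<Rightarrow> int" where
  "pi_minus cs r = (if (False, r) \<in> set cs then 1 else 0)"

end

theory Submission
  imports Defs
begin

(*
  Fix a column j and put rho v = (v - j) mod n for a node v. An arc of length L starting at
  the label of the integer U covers column j (its interval (U, U + L] contains an integer
  congruent to j) exactly when (U - j) mod n + L reaches n; this gives
  n * [arc covers j] = L + rho (tail) - rho (head), and reversing an arc negates both sides.
  Summed over the arcs of a circuit the potential differences cancel, so n times the j-th
  entry of (pi_+ - pi_-)^T Atilde is the total length of the circuit, i.e. p(Gamma) n.
*)

lemma mod_residue_interval_indicator:
  fixes U L j n :: int
  assumes n: "0 < n" and L: "0 \<le> L" "L \<le> n"
  shows "n * of_bool (\<exists>x. U < x \<and> x \<le> U + L \<and> x mod n = j mod n)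
         = L + (U - j) mod n - (U + L - j) mod n"
proof -
  define w where "w = (U - j) mod n"
  define q where "q = (U - j) div n"
  have U: "U - j = n * q + w" unfolding w_def q_def by simp
  have w: "0 \<le> w" "w < n" unfolding w_def using n by auto
  have "U + L - j = (w + L) + q * n"
    using U by (simp add: algebra_simps)
  then have shift: "(U + L - j) mod n = (w + L) mod n"
    by (simp only: mod_mult_self1)
  have hit: "(\<exists>x. U < x \<and> x \<le> U + L \<and> x mod n = j mod n) \<longleftrightarrow> n \<le> w + L"
  proof
    assume "\<exists>x. U < x \<and> x \<le> U + L \<and> x mod n = j mod n"
    then obtain x where x: "U < x" "x \<le> U + L" "n dvd (x - j)"
      by (auto simp: mod_eq_dvd_iff)
    have "x - j = (w + (x - U)) + q * n"
      using U by (simp add: algebra_simps)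
    with x(3) have "n dvd (w + (x - U))"
      by (simp only: dvd_add_times_triv_right_iff)
    then have "n \<le> w + (x - U)"
      using w x(1) by (intro zdvd_imp_le) auto
    then show "n \<le> w + L" using x(2) by simp
  next
    assume "n \<le> w + L"
    moreover have "U + (n - w) - j = n * (q + 1)"
      using U by (simp add: algebra_simps)
    then have "(U + (n - w)) mod n = j mod n"
      by (simp add: mod_eq_dvd_iff)
    ultimately show "\<exists>x. U < x \<and> x \<le> U + L \<and> x mod n = j mod n"
      using w by (intro exI[of _ "U + (n - w)"]) auto
  qed
  show ?thesis
  proof (cases "n \<le> w + L")
    case True
    have "(w + L) mod n = ((w + L - n) + 1 * n) mod n"
      by simp
    also have "\<dots> = (w + L - n) mod n"
      by (rule mod_mult_self1)
    also have "\<dots> = w + L - n"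
      using True w L by (intro mod_pos_pos_trivial) auto
    finally have "(w + L) mod n = w + L - n" .
    then show ?thesis using True hit shift w_def by simp
  next
    case False
    then show ?thesis using hit shift w_def w L by simp
  qed
qed

lemma int_mod1:
  assumes "0 < n"
  shows "int (mod1 n x) = (x - 1) mod int n + 1"
  using assms unfolding mod1_def by simp

lemma mod1_diff_mod:
  assumes "0 < n"
  shows "(int (mod1 n x) - y) mod int n = (x - y) mod int n"
proof -
  have "(int (mod1 n x) - y) mod int n = ((x - 1) mod int n + (1 - y)) mod int n"
    using int_mod1[OF assms] by (simp add: add_diff_eq)
  also have "\<dots> = ((x - 1) + (1 - y)) mod int n"
    by (rule mod_add_left_eq)
  finally show ?thesis
    by simp
qed

lemma mod1_eq_iff:
  assumes "j \<in> {1..n}"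
  shows "mod1 n x = j \<longleftrightarrow> x mod int n = int j mod int n"
proof -
  have "mod1 n x = j \<longleftrightarrow> (x - 1) mod int n = int j - 1"
    using assms int_mod1[of n x] by auto
  also have "int j - 1 = (int j - 1) mod int n"
    using assms by simp
  also have "(x - 1) mod int n = (int j - 1) mod int n \<longleftrightarrow> x mod int n = int j mod int n"
    by (simp add: mod_eq_dvd_iff)
  finally show ?thesis .
qed

lemma Least_cong_mod1:
  assumes "0 < k" "k < n"
  shows "(LEAST t. [a + t = mod1 n (int a + int k)] (mod n)) = k"
proof -
  have cong_iff: "[a + t = mod1 n (int a + int k)] (mod n) \<longleftrightarrow> int n dvd int k - int t" for t
  proof -
    have "[a + t = mod1 n (int a + int k)] (mod n) \<longleftrightarrow>
          (int a + int t) mod int n = int (mod1 n (int a + int k)) mod int n"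
      by (simp add: cong_int_iff[symmetric] cong_def)
    also have "\<dots> \<longleftrightarrow> (int a + int t) mod int n = (int a + int k) mod int n"
      using assms mod1_diff_mod[of n "int a + int k" 0] by simp
    finally show ?thesis
      by (simp add: mod_eq_dvd_iff dvd_diff_commute)
  qed
  show ?thesis
  proof (rule Least_equality)
    show "[a + k = mod1 n (int a + int k)] (mod n)"
      using cong_iff by simp
  next
    fix t
    assume "[a + t = mod1 n (int a + int k)] (mod n)"
    then have "int n dvd int k - int t" using cong_iff by simp
    then show "k \<le> t"
      using assms zdvd_not_zless[of "int k - int t" "int n"] by linarith
  qed
qed

lemma mem_cint_circular_row:
  assumes "0 < k" "k < n" "j \<in> {1..n}"
  shows "j \<in> cint n a (mod1 n (int a + int k)) \<longleftrightarrow>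
    (\<exists>x. int a - 1 < x \<and> x \<le> int a - 1 + int k \<and> x mod int n = int j mod int n)"
proof -
  have "j \<in> cint n a (mod1 n (int a + int k)) \<longleftrightarrow> (\<exists>s<k. mod1 n (int a + int s) = j)"
    using Least_cong_mod1[OF assms(1,2)] unfolding cint_def Let_def by auto
  also have "\<dots> \<longleftrightarrow> (\<exists>s<k. (int a + int s) mod int n = int j mod int n)"
    using mod1_eq_iff[OF assms(3)] by simp
  also have "\<dots> \<longleftrightarrow> (\<exists>x. int a - 1 < x \<and> x \<le> int a - 1 + int k \<and> x mod int n = int j mod int n)"
  proof
    assume "\<exists>s<k. (int a + int s) mod int n = int j mod int n"
    then obtain s where "s < k" "(int a + int s) mod int n = int j mod int n"
      by blast
    then show "\<exists>x. int a - 1 < x \<and> x \<le> int a - 1 + int k \<and> x mod int n = int j mod int n"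
      by (intro exI[of _ "int a + int s"]) auto
  next
    assume "\<exists>x. int a - 1 < x \<and> x \<le> int a - 1 + int k \<and> x mod int n = int j mod int n"
    then obtain x where "int a - 1 < x" "x \<le> int a - 1 + int k" "x mod int n = int j mod int n"
      by blast
    then show "\<exists>s<k. (int a + int s) mod int n = int j mod int n"
      by (intro exI[of _ "nat (x - int a)"]) auto
  qed
  finally show ?thesis .
qed

lemma Atilde_eq_interval_indicator:
  assumes circ: "circular_rep m n A l k" and r: "r \<in> {1..m+n}" and j: "j \<in> {1..n}"
  defines "U \<equiv> int (if r \<le> m then l r else r - m) - 1"
  shows "Atilde m A r j
    = of_bool (\<exists>x. U < x \<and> x \<le> U + fwd_len m k r \<and> x mod int n = int j mod int n)"
proof (cases "r \<le> m")
  case True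
  then have "l r \<in> {1..n}" "2 \<le> k r" "k r \<le> n - 1"
    and "A r j = (if j \<in> cint n (l r) (mod1 n (int (l r) + int (k r))) then 1 else 0)"
    using circ r j unfolding circular_rep_def by auto
  with True j show ?thesis
    unfolding Atilde_def U_def fwd_len_def by (simp add: mem_cint_circular_row)
next
  case False
  have U: "U + 1 = int (r - m)"
    using False unfolding U_def by simp
  have "(\<exists>x. U < x \<and> x \<le> U + 1 \<and> x mod int n = int j mod int n)
    \<longleftrightarrow> int (r - m) mod int n = int j mod int n"
  proof
    assume "\<exists>x. U < x \<and> x \<le> U + 1 \<and> x mod int n = int j mod int n"
    then obtain x where "U < x" "x \<le> U + 1" "x mod int n = int j mod int n"
      by blast
    moreover from calculation have "x = int (r - m)"
      using U by linarith
    ultimately show "int (r - m) mod int n = int j mod int n"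
      by simp
  next
    assume "int (r - m) mod int n = int j mod int n"
    then show "\<exists>x. U < x \<and> x \<le> U + 1 \<and> x mod int n = int j mod int n"
      using U by (intro exI[of _ "U + 1"]) simp
  qed
  also have "\<dots> \<longleftrightarrow> mod1 n (int (r - m)) = j"
    using mod1_eq_iff[OF j] by simp
  also have "mod1 n (int (r - m)) = r - m"
    using False r by (subst mod1_eq_iff) auto
  finally have hit: "(\<exists>x. U < x \<and> x \<le> U + 1 \<and> x mod int n = int j mod int n) \<longleftrightarrow> r - m = j" .
  have "Atilde m A r j = of_bool (r - m = j)" "fwd_len m k r = 1"
    using False by (simp_all add: Atilde_def fwd_len_def)
  then show ?thesis
    by (simp only: hit)
qed

lemma fwd_entry_eq:
  assumes circ: "circular_rep m n A l k" and r: "r \<in> {1..m+n}" and j: "j \<in> {1..n}"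
  shows "int n * Atilde m A r j = fwd_len m k r
    + (int (fwd_tail m n l r) - int j) mod int n - (int (fwd_head m n l k r) - int j) mod int n"
proof -
  have n: "0 < n" using j by simp
  define U where "U = int (if r \<le> m then l r else r - m) - 1"
  have tail: "fwd_tail m n l r = mod1 n U"
    and head: "fwd_head m n l k r = mod1 n (U + fwd_len m k r)"
    unfolding U_def fwd_tail_def fwd_head_def fwd_len_def by (auto simp: algebra_simps)
  have "r \<le> m \<Longrightarrow> k r \<le> n - 1"
    using circ r unfolding circular_rep_def by auto
  then have "0 \<le> fwd_len m k r" "fwd_len m k r \<le> int n"
    using n unfolding fwd_len_def by auto
  then have "int n * Atilde m A r j
      = fwd_len m k r + (U - int j) mod int n - (U + fwd_len m k r - int j) mod int n"
    unfolding Atilde_eq_interval_indicator[OF circ r j] U_def[symmetric]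
    using n by (intro mod_residue_interval_indicator) auto
  then show ?thesis
    unfolding tail head mod1_diff_mod[OF n] .
qed

lemma arc_entry_eq:
  assumes circ: "circular_rep m n A l k" and e: "e \<in> arcs m n" and j: "j \<in> {1..n}"
  shows "int n * (if fst e then Atilde m A (snd e) j else - Atilde m A (snd e) j) = arc_len m k e
    + (int (arc_tail m n l k e) - int j) mod int n - (int (arc_head m n l k e) - int j) mod int n"
proof -
  have "snd e \<in> {1..m+n}" using e unfolding arcs_def by auto
  from fwd_entry_eq[OF circ this j] show ?thesis
    unfolding arc_tail_def arc_head_def arc_len_def by (cases "fst e") (simp_all add: algebra_simps)
qed

lemma sum_list_rotate1:
  fixes xs :: "'a::comm_monoid_add list"
  shows "sum_list (rotate1 xs) = sum_list xs"
  by (cases xs) (simp_all add: add.commute)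

lemma sum_list_cyclic_telescope:
  fixes F :: "'b \<Rightarrow> 'c::ab_group_add"
  assumes "\<And>i. i < length xs \<Longrightarrow> h (xs ! i) = t (xs ! ((i + 1) mod length xs))"
  shows "(\<Sum>x\<leftarrow>xs. F (h x) - F (t x)) = 0"
proof -
  have "map h xs ! i = rotate1 (map t xs) ! i" if "i < length xs" for i
  proof -
    have "Suc i mod length xs < length xs"
      using that by (intro mod_less_divisor) linarith
    then show ?thesis
      using that assms by (simp add: nth_rotate1)
  qed
  then have rot: "map h xs = rotate1 (map t xs)"
    by (intro nth_equalityI) simp_all
  have "(\<Sum>x\<leftarrow>xs. F (h x)) = sum_list (map F (map h xs))"
    by (simp add: comp_def)
  also have "\<dots> = sum_list (rotate1 (map F (map t xs)))"
    by (simp only: rot rotate1_map)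
  also have "\<dots> = (\<Sum>x\<leftarrow>xs. F (t x))"
    by (simp add: sum_list_rotate1 comp_def)
  finally have "(\<Sum>x\<leftarrow>xs. F (h x)) = (\<Sum>x\<leftarrow>xs. F (t x))" .
  then show ?thesis
    by (simp add: sum_list_subtractf)
qed

lemma sum_incidence_eq_sum_arcs:
  fixes f :: "nat \<Rightarrow> int"
  assumes "set \<Gamma> \<subseteq> arcs m n"
  shows "(\<Sum>r=1..m+n. (pi_plus \<Gamma> r - pi_minus \<Gamma> r) * f r)
    = (\<Sum>e\<in>set \<Gamma>. if fst e then f (snd e) else - f (snd e))"
    (is "_ = (\<Sum>e\<in>set \<Gamma>. ?c e)")
proof -
  have "set \<Gamma> \<subseteq> UNIV \<times> {1..m+n}"
    using assms unfolding arcs_def by auto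
  then have "(\<Sum>e\<in>set \<Gamma>. ?c e) = (\<Sum>e\<in>UNIV \<times> {1..m+n}. if e \<in> set \<Gamma> then ?c e else 0)"
    by (simp add: sum.inter_restrict[symmetric] Int_absorb1)
  also have "\<dots> = (\<Sum>d\<in>UNIV. \<Sum>r=1..m+n. if (d, r) \<in> set \<Gamma> then ?c (d, r) else 0)"
    by (simp add: sum.cartesian_product)
  also have "\<dots> = (\<Sum>r=1..m+n. if (False, r) \<in> set \<Gamma> then - f r else 0)
      + (\<Sum>r=1..m+n. if (True, r) \<in> set \<Gamma> then f r else 0)"
    by (simp add: UNIV_bool cong: if_cong)
  also have "\<dots> = (\<Sum>r=1..m+n. (pi_plus \<Gamma> r - pi_minus \<Gamma> r) * f r)"
    unfolding sum.distrib[symmetric] by (rule sum.cong) (auto simp: pi_plus_def pi_minus_def)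
  finally show ?thesis ..
qed

lemma circuit_column_sum_eq_length:
  assumes circ: "circular_rep m n A l k" and \<Gamma>: "is_circuit m n l k \<Gamma>" and j: "j \<in> {1..n}"
  shows "int n * (\<Sum>r=1..m+n. (pi_plus \<Gamma> r - pi_minus \<Gamma> r) * Atilde m A r j)
    = (\<Sum>e\<in>set \<Gamma>. arc_len m k e)"
proof -
  define \<rho> where "\<rho> v = (int v - int j) mod int n" for v
  have arcs: "set \<Gamma> \<subseteq> arcs m n" and dist: "distinct \<Gamma>"
    using \<Gamma> unfolding is_circuit_def by auto
  have "int n * (\<Sum>r=1..m+n. (pi_plus \<Gamma> r - pi_minus \<Gamma> r) * Atilde m A r j)
      = (\<Sum>e\<in>set \<Gamma>. int n * (if fst e then Atilde m A (snd e) j else - Atilde m A (snd e) j))"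
    unfolding sum_incidence_eq_sum_arcs[OF arcs] by (simp add: sum_distrib_left)
  also have "\<dots> = (\<Sum>e\<in>set \<Gamma>. arc_len m k e - (\<rho> (arc_head m n l k e) - \<rho> (arc_tail m n l k e)))"
  proof (rule sum.cong[OF refl])
    fix e
    assume "e \<in> set \<Gamma>"
    with arcs have "e \<in> arcs m n" by auto
    from arc_entry_eq[OF circ this j]
    show "int n * (if fst e then Atilde m A (snd e) j else - Atilde m A (snd e) j)
      = arc_len m k e - (\<rho> (arc_head m n l k e) - \<rho> (arc_tail m n l k e))"
      unfolding \<rho>_def by linarith
  qed
  also have "\<dots> = (\<Sum>e\<in>set \<Gamma>. arc_len m k e)
      - (\<Sum>e\<leftarrow>\<Gamma>. \<rho> (arc_head m n l k e) - \<rho> (arc_tail m n l k e))"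
    using dist by (simp add: sum_subtractf sum_list_distinct_conv_sum_set)
  also have "(\<Sum>e\<leftarrow>\<Gamma>. \<rho> (arc_head m n l k e) - \<rho> (arc_tail m n l k e)) = 0"
    using \<Gamma> unfolding is_circuit_def by (intro sum_list_cyclic_telescope) auto
  finally show ?thesis
    by simp
qed

theorem corollary4p2:
  fixes m n :: nat and A :: "nat \<Rightarrow> nat \<Rightarrow> int" and l k :: "nat \<Rightarrow> nat"
    and \<Gamma> :: "arc list"
  assumes "circular_rep m n A l k"
    and "is_circuit m n l k \<Gamma>"
  shows "\<forall>j\<in>{1..n}.
           real_of_int (\<Sum>r=1..m+n. (pi_plus \<Gamma> r - pi_minus \<Gamma> r) * Atilde m A r j)
             = winding m n k \<Gamma>"
proof
  fix j
  assume j: "j \<in> {1..n}"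
  have "real n * real_of_int (\<Sum>r=1..m+n. (pi_plus \<Gamma> r - pi_minus \<Gamma> r) * Atilde m A r j)
      = real_of_int (\<Sum>e\<in>set \<Gamma>. arc_len m k e)"
    using arg_cong[where f = real_of_int, OF circuit_column_sum_eq_length[OF assms j]]
    by (simp only: of_int_mult of_int_of_nat_eq)
  with j show "real_of_int (\<Sum>r=1..m+n. (pi_plus \<Gamma> r - pi_minus \<Gamma> r) * Atilde m A r j)
      = winding m n k \<Gamma>"
    unfolding winding_def by (simp add: eq_divide_eq mult.commute)
qed

end
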